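(* For every integer $k\geq 0$, the Laurent polynomial \[ T_k(x)=\sum_{l=0}^{k}B_{k-l}(x^{k+1})(x^{k+1}-1)^l\sum_{i=l}^{k}\binom{i}{l}x^{-i} \] is unimodal, i.e. its sequence of coefficients (equivalently, the coefficient sequence of the polynomial $x^kT_k(x)$) is unimodal.
   Context: A signed permutation $\pi=\pi_1\cdots\pi_n$ of $[n]$ is a permutation of $[n]$ in which each entry may carry a minus sign; $B_n$ denotes the set of them. With the convention $\pi_0=0$, $\mathrm{des}_B(\pi)$ is the number of $i\in\{0,1,\dots,n-1\}$ with $\pi_i>\pi_{i+1}$. The type $B$ Eulerian polynomial is $B_n(y)=\sum_{\pi\in B_n}y^{\mathrm{des}_B(\pi)}$, with $B_0(y)=1$. A sequence $s_1,\dots,s_m$ is unimodal if there is $t$ with $s_1\le\cdots\le s_t\ge s_{t+1}\ge\cdots\ge s_m$. *)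

theory Defs
  imports "HOL-Computational_Algebra.Polynomial"
begin

text \<open>Signed permutations of [n]: functions w with w i = 0 outside {1..n}
  (so the convention pi_0 = 0 holds) and i \<mapsto> |w i| a bijection of {1..n}.\<close>
definition signed_perms :: "nat \<Rightarrow> (nat \<Rightarrow> int) set" where
  "signed_perms n = {w. (\<forall>i. i \<notin> {1..n} \<longrightarrow> w i = 0) \<and>
                         bij_betw (\<lambda>i. nat \<bar>w i\<bar>) {1..n} {1..n}}"

definition desB :: "nat \<Rightarrow> (nat \<Rightarrow> int) \<Rightarrow> nat" where
  "desB n w = card {i \<in> {0..<n}. w i > w (Suc i)}"

definition eulerB :: "nat \<Rightarrow> int poly" where
  "eulerB n = (\<Sum>w\<in>signed_perms n. monom 1 (desB n w))"

text \<open>x^k T_k(x), a genuine polynomial.\<close>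
definition Tpoly :: "nat \<Rightarrow> int poly" where
  "Tpoly k = (\<Sum>l=0..k. pcompose (eulerB (k - l)) (monom 1 (k+1))
       * (monom 1 (k+1) - 1) ^ l
       * (\<Sum>i=l..k. monom (int (i choose l)) (k - i)))"

definition unimodal_list :: "'a::linorder list \<Rightarrow> bool" where
  "unimodal_list s \<longleftrightarrow> (\<exists>t. (\<forall>i j. i \<le> j \<and> j \<le> t \<and> j < length s \<longrightarrow> s!i \<le> s!j) \<and>
                           (\<forall>i j. t \<le> i \<and> i \<le> j \<and> j < length s \<longrightarrow> s!j \<le> s!i))"

end

theory Submission
  imports Defs
begin

text \<open>Inserting the letter \<open>\<plusminus>(n + 1)\<close> into a signed permutation of \<open>[n]\<close> gives Brenti's
  recurrence \<open>B(n+1) = (1 + (2n+1)x) B(n) + 2x(1 - x) B(n)'\<close>. Put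
  \<open>H(a,b) = \<Sum>\<^sub>l (-1)^l (a choose l) (1 - x)^l B(a+b-l)\<close> (\<open>hpoly a b\<close>). Exchanging the order
  of summation gives \<open>x^k T\<^sub>k(x) = \<Sum>\<^sub>r x^r H(k-r,r)(x^(k+1))\<close>, so the coefficient of
  \<open>x^(M(k+1) + r)\<close>, \<open>r \<le> k\<close>, is the \<open>M\<close>-th coefficient of \<open>H(k-r,r)\<close>. Both \<open>H(a,b+1)\<close> and
  \<open>H(a+1,b) = H(a,b+1) - (1 - x) H(a,b)\<close> arise from \<open>H(a,b)\<close> by linear recurrences on the
  coefficients that preserve alternating increase \<open>h\<^sub>0 \<le> h\<^sub>n \<le> h\<^sub>1 \<le> h\<^sub>n\<^sub>-\<^sub>1 \<le> \<dots>\<close>, so every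
  \<open>H(a,b)\<close> rises up to its middle coefficient and falls afterwards. Inside a block of \<open>k + 1\<close>
  consecutive coefficients of \<open>x^k T\<^sub>k\<close>, neighbours differ by a coefficient of
  \<open>(1 - x) H(k-r-1,r)\<close>, whose sign is therefore known. Across blocks one compares \<open>B(k) = H(0,k)\<close>
  with \<open>H(k,0)\<close>: both are palindromic, and by the same sign argument the coefficients below
  (above) the middle increase (decrease) along \<open>H(k,0), H(k-1,1), \<dots>, H(0,k)\<close>.\<close>

section \<open>Signed permutations and insertion of the largest letter\<close>

lemma signed_perms_iff:
  "w \<in> signed_perms n \<longleftrightarrow>
     (\<forall>i. i \<notin> {1..n} \<longrightarrow> w i = 0) \<and> (\<lambda>i. nat \<bar>w i\<bar>) ` {1..n} = {1..n}"
  unfolding signed_perms_def bij_betw_def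
  using eq_card_imp_inj_on[of "{1..n}" "\<lambda>i. nat \<bar>w i\<bar>"] by auto

lemma signed_perms_image: "w \<in> signed_perms n \<Longrightarrow> (\<lambda>i. nat \<bar>w i\<bar>) ` {1..n} = {1..n}"
  by (simp only: signed_perms_iff)

lemma signed_perms_vanish: "w \<in> signed_perms n \<Longrightarrow> i \<notin> {1..n} \<Longrightarrow> w i = 0"
  by (simp add: signed_perms_iff)

lemma signed_perms_abs_le:
  assumes "w \<in> signed_perms n"
  shows "\<bar>w i\<bar> \<le> int n"
proof (cases "i \<in> {1..n}")
  case True
  then have "nat \<bar>w i\<bar> \<in> {1..n}"
    using assms by (auto simp: signed_perms_iff)
  then show ?thesis
    by auto
next
  case False
  then show ?thesis
    using signed_perms_vanish[OF assms False] by simp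
qed

lemma signed_perms_inj_on: "w \<in> signed_perms n \<Longrightarrow> inj_on (\<lambda>i. nat \<bar>w i\<bar>) {1..n}"
  unfolding signed_perms_def bij_betw_def by auto

definition insert_at :: "(nat \<Rightarrow> int) \<Rightarrow> nat \<Rightarrow> int \<Rightarrow> nat \<Rightarrow> int" where
  "insert_at w p v = (\<lambda>i. if i < p then w i else if i = p then v else w (i - 1))"

definition delete_at :: "(nat \<Rightarrow> int) \<Rightarrow> nat \<Rightarrow> nat \<Rightarrow> int" where
  "delete_at u p = (\<lambda>i. if i < p then u i else u (Suc i))"

lemma delete_insert_at [simp]: "delete_at (insert_at w p v) p = w"
  by (rule ext) (auto simp: delete_at_def insert_at_def)

lemma insert_delete_at [simp]: "insert_at (delete_at u p) p (u p) = u"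
  by (rule ext) (auto simp: delete_at_def insert_at_def)

lemma ivl_split_at:
  "p \<in> {1..Suc n} \<Longrightarrow> {1..Suc n} = {1..<p} \<union> {p} \<union> {Suc p..Suc n}"
  by auto

lemma insert_at_in_signed_perms:
  assumes w: "w \<in> signed_perms n" and p: "p \<in> {1..Suc n}" and v: "\<bar>v\<bar> = int (Suc n)"
  shows "insert_at w p v \<in> signed_perms (Suc n)"
proof -
  let ?a = "\<lambda>i. nat \<bar>w i\<bar>" and ?b = "\<lambda>i. nat \<bar>insert_at w p v i\<bar>"
  have "?b ` {1..<p} = ?a ` {1..<p}"
    by (rule image_cong) (auto simp: insert_at_def)
  moreover have "?b ` {Suc p..Suc n} = ?a ` {p..n}"
    unfolding image_Suc_atLeastAtMost[symmetric] image_image by (simp add: insert_at_def)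
  moreover have "?b p = Suc n"
    using v by (simp add: insert_at_def)
  ultimately have "?b ` {1..Suc n} = ?a ` ({1..<p} \<union> {p..n}) \<union> {Suc n}"
    unfolding ivl_split_at[OF p] image_Un by auto
  also have "{1..<p} \<union> {p..n} = {1..n}"
    using p by auto
  also have "?a ` {1..n} = {1..n}"
    by (rule signed_perms_image[OF w])
  finally have "?b ` {1..Suc n} = {1..Suc n}"
    by auto
  moreover have "insert_at w p v i = 0" if "i \<notin> {1..Suc n}" for i
    using that p by (cases "i = 0") (auto simp: insert_at_def intro!: signed_perms_vanish[OF w])
  ultimately show ?thesis
    by (simp add: signed_perms_iff)
qed

lemma delete_at_in_signed_perms:
  assumes u: "u \<in> signed_perms (Suc n)" and p: "p \<in> {1..Suc n}" and up: "nat \<bar>u p\<bar> = Suc n"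
  shows "delete_at u p \<in> signed_perms n"
proof -
  let ?a = "\<lambda>i. nat \<bar>u i\<bar>" and ?b = "\<lambda>i. nat \<bar>delete_at u p i\<bar>"
  have "{1..n} = {1..<p} \<union> {p..n}"
    using p by auto
  then have "?b ` {1..n} = ?b ` {1..<p} \<union> ?b ` {p..n}"
    by (simp only: image_Un)
  also have "?b ` {1..<p} = ?a ` {1..<p}"
    by (rule image_cong) (auto simp: delete_at_def)
  also have "?b ` {p..n} = ?a ` {Suc p..Suc n}"
    unfolding image_Suc_atLeastAtMost[symmetric] image_image by (simp add: delete_at_def)
  also have "?a ` {1..<p} \<union> ?a ` {Suc p..Suc n} = ?a ` ({1..Suc n} - {p})"
    unfolding image_Un[symmetric] using p by (intro arg_cong[where f = "image ?a"]) auto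
  also have "\<dots> = ?a ` {1..Suc n} - ?a ` {p}"
    by (rule inj_on_image_set_diff[OF signed_perms_inj_on[OF u]]) (use p in auto)
  also have "\<dots> = {1..Suc n} - {Suc n}"
    using up unfolding signed_perms_image[OF u] by simp
  also have "{1..Suc n} - {Suc n} = {1..n}"
    by auto
  finally have "?b ` {1..n} = {1..n}" .
  moreover have "delete_at u p i = 0" if "i \<notin> {1..n}" for i
    using that p by (auto simp: delete_at_def intro!: signed_perms_vanish[OF u])
  ultimately show ?thesis
    by (simp add: signed_perms_iff)
qed

lemma abs_insert_at_eq_iff:
  assumes w: "w \<in> signed_perms n" and v: "\<bar>v\<bar> = int (Suc n)"
  shows "nat \<bar>insert_at w p v i\<bar> = Suc n \<longleftrightarrow> i = p"
proof -
  have "nat \<bar>w j\<bar> \<noteq> Suc n" for j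
    using signed_perms_abs_le[OF w, of j] by linarith
  then show ?thesis
    using v by (auto simp: insert_at_def)
qed

lemma bij_betw_insert_at:
  "bij_betw (\<lambda>(w, p, v). insert_at w p v)
     (signed_perms n \<times> {1..Suc n} \<times> {int (Suc n), - int (Suc n)}) (signed_perms (Suc n))"
proof (rule bij_betwI')
  fix x y
  assume x: "x \<in> signed_perms n \<times> {1..Suc n} \<times> {int (Suc n), - int (Suc n)}"
    and y: "y \<in> signed_perms n \<times> {1..Suc n} \<times> {int (Suc n), - int (Suc n)}"
  obtain w p v w' p' v' where xy: "x = (w, p, v)" "y = (w', p', v')"
    by (metis prod_cases3)
  have w: "w \<in> signed_perms n" "w' \<in> signed_perms n" and v: "\<bar>v\<bar> = int (Suc n)" "\<bar>v'\<bar> = int (Suc n)"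
    using x y xy by auto
  show "((\<lambda>(w, p, v). insert_at w p v) x = (\<lambda>(w, p, v). insert_at w p v) y) = (x = y)"
  proof
    assume "(\<lambda>(w, p, v). insert_at w p v) x = (\<lambda>(w, p, v). insert_at w p v) y"
    then have eq: "insert_at w p v = insert_at w' p' v'"
      using xy by simp
    then have "p = p'"
      using abs_insert_at_eq_iff[OF w(1) v(1), of p p] abs_insert_at_eq_iff[OF w(2) v(2), of p' p]
      by simp
    moreover have "v = v'"
      using fun_cong[OF eq, of p] \<open>p = p'\<close> by (simp add: insert_at_def)
    moreover have "w = w'"
      using arg_cong[OF eq, of "\<lambda>u. delete_at u p"] \<open>p = p'\<close> by simp
    ultimately show "x = y"
      using xy by simp
  qed simp
next
  fix x
  assume "x \<in> signed_perms n \<times> {1..Suc n} \<times> {int (Suc n), - int (Suc n)}"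
  then show "(\<lambda>(w, p, v). insert_at w p v) x \<in> signed_perms (Suc n)"
    by (auto intro: insert_at_in_signed_perms)
next
  fix u
  assume u: "u \<in> signed_perms (Suc n)"
  have "Suc n \<in> (\<lambda>i. nat \<bar>u i\<bar>) ` {1..Suc n}"
    unfolding signed_perms_image[OF u] by simp
  then obtain p where p: "p \<in> {1..Suc n}" "nat \<bar>u p\<bar> = Suc n"
    by (auto simp: image_iff)
  then have "(delete_at u p, p, u p) \<in> signed_perms n \<times> {1..Suc n} \<times> {int (Suc n), - int (Suc n)}"
    using delete_at_in_signed_perms[OF u p] by auto
  then show "\<exists>x \<in> signed_perms n \<times> {1..Suc n} \<times> {int (Suc n), - int (Suc n)}.
      u = (\<lambda>(w, p, v). insert_at w p v) x"
    by (rule rev_bexI) simp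
qed

section \<open>The recurrence for the type B Eulerian polynomials\<close>

lemma desB_eq_sum: "desB n w = (\<Sum>i<n. of_bool (w (Suc i) < w i))"
proof -
  have "{i \<in> {0..<n}. w (Suc i) < w i} = {..<n} \<inter> {i. w (Suc i) < w i}"
    by auto
  then show ?thesis
    by (simp add: desB_def)
qed

lemma sum_lessThan_split:
  "q < n \<Longrightarrow> (\<Sum>i<n. f i) = (\<Sum>i<q. f i) + f q + (\<Sum>i\<in>{Suc q..<n}. f i)"
  using sum.atLeastLessThan_concat[of 0 q n f] sum.atLeast_Suc_lessThan[of q n f]
  by (simp add: lessThan_atLeast0 add.assoc)

lemma desB_insert_at:
  assumes w: "w \<in> signed_perms n" and q: "q < n" and v: "\<bar>v\<bar> = int (Suc n)"
  shows "desB (Suc n) (insert_at w (Suc q) v) + of_bool (w (Suc q) < w q) = desB n w + 1"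
proof -
  define u where "u = insert_at w (Suc q) v"
  define d where "d f i = (of_bool (f (Suc i) < f i) :: nat)" for f :: "nat \<Rightarrow> int" and i
  have "desB (Suc n) u = (\<Sum>i<q. d u i) + (d u q + d u (Suc q)) + (\<Sum>i\<in>{Suc (Suc q)..<Suc n}. d u i)"
    using sum_lessThan_split[of q "Suc n" "d u"] sum.atLeast_Suc_lessThan[of "Suc q" "Suc n" "d u"] q
    by (simp add: desB_eq_sum d_def add.assoc)
  also have "(\<Sum>i<q. d u i) = (\<Sum>i<q. d w i)"
    by (rule sum.cong) (auto simp: d_def u_def insert_at_def)
  also have "d u q + d u (Suc q) = 1"
    using v signed_perms_abs_le[OF w, of q] signed_perms_abs_le[OF w, of "Suc q"]
    by (auto simp: d_def u_def insert_at_def)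
  also have "(\<Sum>i\<in>{Suc (Suc q)..<Suc n}. d u i) = (\<Sum>i\<in>{Suc q..<n}. d w i)"
    unfolding sum.shift_bounds_Suc_ivl by (rule sum.cong) (auto simp: d_def u_def insert_at_def)
  finally show ?thesis
    using sum_lessThan_split[of q n "d w"] q by (simp add: desB_eq_sum d_def u_def)
qed

lemma desB_insert_at_last:
  assumes w: "w \<in> signed_perms n" and v: "\<bar>v\<bar> = int (Suc n)"
  shows "desB (Suc n) (insert_at w (Suc n) v) = desB n w + of_bool (v < 0)"
proof -
  have "(\<Sum>i<n. of_bool (insert_at w (Suc n) v (Suc i) < insert_at w (Suc n) v i)) = desB n w"
    unfolding desB_eq_sum by (rule sum.cong) (auto simp: insert_at_def)
  moreover have "(insert_at w (Suc n) v (Suc n) < insert_at w (Suc n) v n) = (v < 0)"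
    using v signed_perms_abs_le[OF w, of n] by (auto simp: insert_at_def)
  ultimately show ?thesis
    by (simp add: desB_eq_sum)
qed

definition eulerB_step :: "nat \<Rightarrow> int poly \<Rightarrow> int poly" where
  "eulerB_step n h = (1 + of_nat (2 * n + 1) * [:0, 1:]) * h + 2 * [:0, 1:] * (1 - [:0, 1:]) * pderiv h"

lemma eulerB_step_sum: "eulerB_step n (sum f A) = (\<Sum>x\<in>A. eulerB_step n (f x))"
  using higher_pderiv_sum[of 1 f A]
  by (simp add: eulerB_step_def sum_distrib_left sum.distrib)

lemma eulerB_step_monom:
  "eulerB_step n (monom 1 d) =
     (2 * of_nat d + 1) * monom 1 d + (2 * of_nat n - 2 * of_nat d + 1) * monom 1 (Suc d)"
proof -
  define X :: "int poly" where "X = [:0, 1:]"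
  have Xm: "X * monom 1 d = monom 1 (Suc d)"
    by (simp add: X_def monom_Suc)
  have "X * pderiv (monom 1 d) = monom (of_nat d) d"
    unfolding X_def by (simp add: pderiv_monom) (cases d; simp add: monom_Suc)
  also have "\<dots> = of_nat d * monom 1 d"
    by (simp add: of_nat_poly smult_monom)
  finally have XD: "X * pderiv (monom 1 d) = of_nat d * monom 1 d" .
  have "eulerB_step n (monom 1 d) = monom 1 d + of_nat (2 * n + 1) * (X * monom 1 d)
      + 2 * (X * pderiv (monom 1 d)) - 2 * X * (X * pderiv (monom 1 d))"
    unfolding eulerB_step_def X_def[symmetric] by (simp add: algebra_simps)
  also have "\<dots> = monom 1 d + of_nat (2 * n + 1) * monom 1 (Suc d)
      + 2 * of_nat d * monom 1 d - 2 * of_nat d * monom 1 (Suc d)"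
    unfolding XD Xm[symmetric] by (simp add: algebra_simps)
  finally show ?thesis
    by (simp add: algebra_simps)
qed

lemma sum_insert_at_descents:
  assumes w: "w \<in> signed_perms n"
  shows "(\<Sum>p\<in>{1..Suc n}. \<Sum>v\<in>{int (Suc n), - int (Suc n)}. monom 1 (desB (Suc n) (insert_at w p v)))
     = eulerB_step n (monom 1 (desB n w))"
proof -
  define d where "d = desB n w"
  define P where "P q \<longleftrightarrow> w (Suc q) < w q" for q
  define F where "F p = (\<Sum>v\<in>{int (Suc n), - int (Suc n)}. monom (1::int) (desB (Suc n) (insert_at w p v)))" for p
  have F_inner: "F (Suc q) = 2 * (of_bool (P q) * monom 1 d + of_bool (\<not> P q) * monom 1 (Suc d))"
    if "q < n" for q
  proof -
    have desB_q: "desB (Suc n) (insert_at w (Suc q) v) = (if P q then d else Suc d)"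
      if "v \<in> {int (Suc n), - int (Suc n)}" for v
      using desB_insert_at[OF w \<open>q < n\<close>, of v] that by (cases "P q") (auto simp: d_def P_def)
    have "F (Suc q) = (\<Sum>v\<in>{int (Suc n), - int (Suc n)}. monom 1 (if P q then d else Suc d))"
      unfolding F_def by (rule sum.cong[OF refl]) (simp only: desB_q)
    then show ?thesis
      by simp
  qed
  have F_last: "F (Suc n) = monom 1 d + monom 1 (Suc d)"
    using desB_insert_at_last[OF w] by (simp add: F_def d_def)
  have card_P: "(\<Sum>q<n. of_bool (P q)) = (of_nat d :: int poly)"
    by (simp add: d_def desB_eq_sum P_def flip: of_nat_sum)
  have "(\<Sum>q<n. of_bool (P q)) + (\<Sum>q<n. of_bool (\<not> P q)) = (\<Sum>q<n. 1 :: int poly)"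
    unfolding sum.distrib[symmetric] by (rule sum.cong) simp_all
  then have card_not_P: "(\<Sum>q<n. of_bool (\<not> P q)) = (of_nat n - of_nat d :: int poly)"
    unfolding card_P by (simp add: eq_diff_eq add.commute del: sum_of_bool_eq)
  have "(\<Sum>p\<in>{1..Suc n}. F p) = (\<Sum>q<n. F (Suc q)) + F (Suc n)"
    by (simp add: sum.shift_bounds_cl_Suc_ivl[of F 0 n, simplified] atLeast0AtMost lessThan_Suc_atMost[symmetric])
  also have "(\<Sum>q<n. F (Suc q)) =
      (\<Sum>q<n. 2 * (of_bool (P q) * monom 1 d + of_bool (\<not> P q) * monom 1 (Suc d)))"
    by (rule sum.cong) (simp_all add: F_inner)
  also have "\<dots> = 2 * (of_nat d * monom 1 d + (of_nat n - of_nat d) * monom 1 (Suc d))"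
    unfolding sum_distrib_left[symmetric] sum.distrib sum_distrib_right[symmetric] card_P card_not_P ..
  finally show ?thesis
    unfolding F_def[symmetric] d_def[symmetric] eulerB_step_monom F_last by (simp add: algebra_simps)
qed

lemma eulerB_Suc: "eulerB (Suc n) = eulerB_step n (eulerB n)"
proof -
  let ?D = "signed_perms n \<times> {1..Suc n} \<times> {int (Suc n), - int (Suc n)}"
  have "eulerB (Suc n) = (\<Sum>x\<in>?D. monom 1 (desB (Suc n) ((\<lambda>(w, p, v). insert_at w p v) x)))"
    unfolding eulerB_def by (rule sum.reindex_bij_betw[OF bij_betw_insert_at, symmetric])
  also have "\<dots> = (\<Sum>w\<in>signed_perms n. \<Sum>p\<in>{1..Suc n}. \<Sum>v\<in>{int (Suc n), - int (Suc n)}.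
      monom 1 (desB (Suc n) (insert_at w p v)))"
    by (simp only: sum.cartesian_product' split_def fst_conv snd_conv)
  also have "\<dots> = eulerB_step n (eulerB n)"
    unfolding eulerB_def eulerB_step_sum by (intro sum.cong refl sum_insert_at_descents)
  finally show ?thesis .
qed

lemma eulerB_0: "eulerB 0 = 1"
proof -
  have "signed_perms 0 = {\<lambda>i. 0}"
    unfolding signed_perms_def by (auto simp: bij_betw_def)
  then show ?thesis
    by (simp add: eulerB_def desB_def)
qed

section \<open>The polynomials \<open>hpoly a b\<close> and the coefficients of \<open>Tpoly k\<close>\<close>

lemma eulerB_step_smult: "eulerB_step n (smult c h) = smult c (eulerB_step n h)"
  by (simp add: eulerB_step_def pderiv_smult mult_smult_right smult_add_right)

lemma eulerB_step_one_minus_X: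
  "eulerB_step (Suc n) ((1 - [:0, 1:]) * g) = (1 - [:0, 1:]) * eulerB_step n g"
proof -
  define X :: "int poly" where "X = [:0, 1:]"
  have "pderiv X = 1"
    by (simp add: X_def pderiv_pCons)
  then show ?thesis
    unfolding eulerB_step_def X_def[symmetric] pderiv_mult pderiv_diff by (simp add: algebra_simps)
qed

lemma eulerB_step_one_minus_X_power:
  "l \<le> n \<Longrightarrow> eulerB_step n ((1 - [:0, 1:]) ^ l * g) = (1 - [:0, 1:]) ^ l * eulerB_step (n - l) g"
proof (induction l arbitrary: n)
  case (Suc l)
  then obtain m where n: "n = Suc m" "l \<le> m"
    by (cases n) auto
  then show ?case
    using Suc.IH[OF n(2)] eulerB_step_one_minus_X[of m "(1 - [:0, 1:]) ^ l * g"]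
    by (simp add: mult.assoc)
qed simp

definition hpoly :: "nat \<Rightarrow> nat \<Rightarrow> int poly" where
  "hpoly a b = (\<Sum>l\<le>a. smult ((-1) ^ l * int (a choose l)) ((1 - [:0, 1:]) ^ l * eulerB (a + b - l)))"

lemma hpoly_0_left [simp]: "hpoly 0 b = eulerB b"
  by (simp add: hpoly_def)

lemma hpoly_Suc_right: "hpoly a (Suc b) = eulerB_step (a + b) (hpoly a b)"
  unfolding hpoly_def eulerB_step_sum eulerB_step_smult
proof (rule sum.cong[OF refl])
  fix l
  assume "l \<in> {..a}"
  then have "l \<le> a + b" and "eulerB (a + Suc b - l) = eulerB_step (a + b - l) (eulerB (a + b - l))"
    by (simp_all add: Suc_diff_le flip: eulerB_Suc)
  then show "smult ((-1) ^ l * int (a choose l)) ((1 - [:0, 1:]) ^ l * eulerB (a + Suc b - l)) =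
      smult ((-1) ^ l * int (a choose l)) (eulerB_step (a + b) ((1 - [:0, 1:]) ^ l * eulerB (a + b - l)))"
    by (simp add: eulerB_step_one_minus_X_power)
qed

lemma hpoly_Suc_left: "hpoly (Suc a) b = hpoly a (Suc b) - (1 - [:0, 1:]) * hpoly a b"
proof -
  define U :: "int poly" where "U = 1 - [:0, 1:]"
  define c where "c m l = (-1) ^ l * int (m choose l)" for m l :: nat
  define F where "F l = smult (c (Suc a) l) (U ^ l * eulerB (Suc a + b - l))" for l
  define f where "f l = smult (c a l) (U ^ l * eulerB (a + Suc b - l))" for l
  define g where "g l = smult (c a l) (U ^ Suc l * eulerB (a + b - l))" for l
  have "hpoly (Suc a) b = (\<Sum>l\<le>Suc a. F l)"
    unfolding hpoly_def F_def U_def c_def ..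
  also have "\<dots> = F 0 + (\<Sum>l\<le>a. F (Suc l))"
    by (rule sum.atMost_Suc_shift)
  also have "(\<Sum>l\<le>a. F (Suc l)) = (\<Sum>l\<le>a. f (Suc l) - g l)"
  proof (rule sum.cong[OF refl])
    fix l
    have "c (Suc a) (Suc l) = c a (Suc l) - c a l"
      by (simp add: c_def algebra_simps)
    then show "F (Suc l) = f (Suc l) - g l"
      by (simp add: F_def f_def g_def smult_diff_left)
  qed
  also have "\<dots> = (\<Sum>l\<le>a. f (Suc l)) - (\<Sum>l\<le>a. g l)"
    by (rule sum_subtractf)
  also have "F 0 + \<dots> = (f 0 + (\<Sum>l\<le>a. f (Suc l))) - (\<Sum>l\<le>a. g l)"
    by (simp add: F_def f_def c_def)
  also have "f 0 + (\<Sum>l\<le>a. f (Suc l)) = (\<Sum>l\<le>Suc a. f l)"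
    by (rule sum.atMost_Suc_shift[symmetric])
  also have "\<dots> = hpoly a (Suc b)"
    by (simp add: f_def c_def hpoly_def U_def)
  also have "(\<Sum>l\<le>a. g l) = U * hpoly a b"
    by (simp add: g_def c_def hpoly_def U_def sum_distrib_left mult_smult_right mult.assoc)
  finally show ?thesis
    unfolding U_def .
qed

lemma sum_triangle_swap:
  fixes k :: nat
  shows "(\<Sum>l\<le>k. \<Sum>i\<in>{l..k}. F l i) = (\<Sum>i\<le>k. \<Sum>l\<le>i. F l i)"
proof (induction k)
  case (Suc k)
  have "(\<Sum>l\<le>Suc k. \<Sum>i\<in>{l..Suc k}. F l i) =
      (\<Sum>l\<le>k. (\<Sum>i\<in>{l..k}. F l i) + F l (Suc k)) + F (Suc k) (Suc k)"
    by (simp add: sum.cl_ivl_Suc)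
  then show ?case
    by (simp add: sum.distrib Suc.IH)
qed simp

lemma pcompose_power: "p ^ n \<circ>\<^sub>p q = (p \<circ>\<^sub>p q) ^ n"
  by (induction n) (simp_all add: pcompose_mult pcompose_1)

lemma Tpoly_eq_sum_hpoly:
  "Tpoly k = (\<Sum>r\<le>k. monom 1 r * (hpoly (k - r) r \<circ>\<^sub>p monom 1 (k + 1)))"
proof -
  define Z :: "int poly" where "Z = monom 1 (k + 1)"
  define P where "P l = eulerB (k - l) \<circ>\<^sub>p Z" for l
  define F where "F l i = smult (int (i choose l)) (P l * (Z - 1) ^ l * monom 1 (k - i))" for l i
  have "Tpoly k = (\<Sum>l\<le>k. \<Sum>i\<in>{l..k}. F l i)"
    unfolding Tpoly_def Z_def[symmetric] P_def[symmetric] F_def atLeast0AtMost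
    by (simp add: sum_distrib_left) (intro sum.cong refl, simp add: smult_monom flip: mult_smult_right)
  also have "\<dots> = (\<Sum>i\<le>k. \<Sum>l\<le>i. F l i)"
    by (rule sum_triangle_swap)
  also have "\<dots> = (\<Sum>r\<le>k. \<Sum>l\<le>k - r. F l (k - r))"
    unfolding atLeast0AtMost[symmetric] by (subst sum.atLeastAtMost_rev) simp
  also have "\<dots> = (\<Sum>r\<le>k. monom 1 r * (hpoly (k - r) r \<circ>\<^sub>p Z))"
  proof (rule sum.cong[OF refl])
    fix r
    assume "r \<in> {..k}"
    then have "monom 1 r * (hpoly (k - r) r \<circ>\<^sub>p Z) =
        (\<Sum>l\<le>k - r. monom 1 r * smult ((-1) ^ l * int (k - r choose l)) ((1 - Z) ^ l * P l))"
      by (simp add: hpoly_def P_def pcompose_sum pcompose_smult pcompose_mult pcompose_power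
          pcompose_diff pcompose_pCons pcompose_1 sum_distrib_left)
    also have "\<dots> = (\<Sum>l\<le>k - r. F l (k - r))"
    proof (rule sum.cong[OF refl])
      fix l
      have "(Z - 1) ^ l = (-1) ^ l * (1 - Z) ^ l"
        by (metis minus_diff_eq mult_minus1 power_mult_distrib)
      moreover have "smult c p = of_int c * p" for c :: int and p :: "int poly"
        by (simp add: of_int_poly)
      ultimately show "monom 1 r * smult ((-1) ^ l * int (k - r choose l)) ((1 - Z) ^ l * P l) = F l (k - r)"
        using \<open>r \<in> {..k}\<close> by (simp add: F_def algebra_simps)
    qed
    finally show "(\<Sum>l\<le>k - r. F l (k - r)) = monom 1 r * (hpoly (k - r) r \<circ>\<^sub>p Z)"
      by simp
  qed
  finally show ?thesis
    unfolding Z_def .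
qed

lemma coeff_pcompose_monom:
  fixes p :: "'a::comm_semiring_1 poly"
  assumes m: "0 < m"
  shows "coeff (p \<circ>\<^sub>p monom 1 m) j = (if m dvd j then coeff p (j div m) else 0)"
proof (induction p arbitrary: j rule: pCons_induct)
  case (pCons a p)
  have e: "coeff (pCons a p \<circ>\<^sub>p monom 1 m) j =
      (if j = 0 then a else 0) + (if j < m then 0 else coeff (p \<circ>\<^sub>p monom 1 m) (j - m))"
    by (simp add: pcompose_pCons coeff_monom_mult coeff_pCons split: nat.split)
  show ?case
  proof (cases "j < m")
    case True
    then have "m dvd j \<longleftrightarrow> j = 0"
      using m by (auto dest: dvd_imp_le)
    then show ?thesis
      using e True by auto
  next
    case False
    then have "m dvd (j - m) \<longleftrightarrow> m dvd j" and "j div m = Suc ((j - m) div m)"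
      using m by (simp_all add: dvd_minus_self le_div_geq)
    then show ?thesis
      using e False pCons.IH[of "j - m"] m by auto
  qed
qed simp

lemma coeff_Tpoly:
  assumes r: "r \<le> k"
  shows "coeff (Tpoly k) (M * (k + 1) + r) = coeff (hpoly (k - r) r) M"
proof -
  define j where "j = M * (k + 1) + r"
  have coeff_term: "coeff (monom 1 s * (hpoly (k - s) s \<circ>\<^sub>p monom 1 (k + 1))) j
      = (if s = r then coeff (hpoly (k - r) r) M else 0)" if s: "s \<le> k" for s
  proof -
    have jr: "j - r = M * (k + 1)"
      by (simp add: j_def)
    have "s \<le> j \<and> (k + 1) dvd (j - s) \<longleftrightarrow> s = r"
    proof
      assume "s \<le> j \<and> (k + 1) dvd (j - s)"
      then obtain c where "j = c * (k + 1) + s"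
        by (metis dvdE le_add_diff_inverse2 mult.commute)
      then have "j mod (k + 1) = s"
        using s by (metis le_imp_less_Suc Suc_eq_plus1 mod_less mod_mult_self3)
      moreover have "j mod (k + 1) = r"
        using r unfolding j_def by (metis le_imp_less_Suc Suc_eq_plus1 mod_less mod_mult_self3)
      ultimately show "s = r"
        by simp
    next
      assume "s = r"
      then show "s \<le> j \<and> (k + 1) dvd (j - s)"
        using jr unfolding j_def by (metis dvd_triv_right le_add2)
    qed
    moreover have "(j - r) div (k + 1) = M"
      unfolding jr by (rule nonzero_mult_div_cancel_right) simp
    ultimately show ?thesis
      by (auto simp: coeff_monom_mult coeff_pcompose_monom)
  qed
  have "coeff (Tpoly k) j = (\<Sum>s\<le>k. coeff (monom 1 s * (hpoly (k - s) s \<circ>\<^sub>p monom 1 (k + 1))) j)"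
    by (simp add: Tpoly_eq_sum_hpoly coeff_sum)
  also have "\<dots> = (\<Sum>s\<le>k. if s = r then coeff (hpoly (k - r) r) M else 0)"
    by (rule sum.cong[OF refl], rule coeff_term) simp
  also have "\<dots> = coeff (hpoly (k - r) r) M"
    using r by simp
  finally show ?thesis
    unfolding j_def .
qed

section \<open>Alternatingly increasing coefficient sequences\<close>

fun coeff_step :: "nat \<Rightarrow> int \<Rightarrow> (nat \<Rightarrow> int) \<Rightarrow> nat \<Rightarrow> int" where
  "coeff_step n e f 0 = e * f 0"
| "coeff_step n e f (Suc M) = (2 * int M + 2 + e) * f (Suc M) + (2 * int n + 2 - 2 * int M - e) * f M"

lemma eulerB_step_expand:
  "eulerB_step n h = h + smult (2 * int n + 1) (pCons 0 h) + smult 2 (pCons 0 (pderiv h))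
     - smult 2 (pCons 0 (pCons 0 (pderiv h)))"
  by (simp add: eulerB_step_def algebra_simps of_nat_poly numeral_poly smult_add_left)

lemma coeff_eulerB_step: "coeff (eulerB_step n h) = coeff_step n 1 (coeff h)"
proof
  fix j
  show "coeff (eulerB_step n h) j = coeff_step n 1 (coeff h) j"
    by (cases j) (auto simp: eulerB_step_expand coeff_pderiv coeff_pCons algebra_simps split: nat.split)
qed

lemma coeff_eulerB_step_minus:
  "coeff (eulerB_step n h - (1 - [:0, 1:]) * h) = coeff_step n 0 (coeff h)"
proof
  fix j
  show "coeff (eulerB_step n h - (1 - [:0, 1:]) * h) j = coeff_step n 0 (coeff h) j"
    by (cases j) (auto simp: eulerB_step_expand coeff_pderiv coeff_pCons algebra_simps split: nat.split)
qed

lemma coeff_hpoly_Suc_right: "coeff (hpoly a (Suc b)) = coeff_step (a + b) 1 (coeff (hpoly a b))"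
  by (simp add: hpoly_Suc_right coeff_eulerB_step)

lemma coeff_hpoly_Suc_left: "coeff (hpoly (Suc a) b) = coeff_step (a + b) 0 (coeff (hpoly a b))"
  by (simp add: hpoly_Suc_left hpoly_Suc_right coeff_eulerB_step_minus)

definition alternatingly_increasing :: "nat \<Rightarrow> (nat \<Rightarrow> int) \<Rightarrow> bool" where
  "alternatingly_increasing n f \<longleftrightarrow> (\<forall>i. 0 \<le> f i) \<and> (\<forall>i>n. f i = 0) \<and>
     (\<forall>i. 2 * i < n \<longrightarrow> f i \<le> f (n - i)) \<and> (\<forall>i. 2 * i + 2 \<le> n \<longrightarrow> f (n - i) \<le> f (Suc i))"

lemma
  assumes "alternatingly_increasing n f"
  shows alternatingly_increasing_nonneg: "0 \<le> f i"
    and alternatingly_increasing_vanish: "n < i \<Longrightarrow> f i = 0"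
    and alternatingly_increasing_le_mirror: "2 * i < n \<Longrightarrow> f i \<le> f (n - i)"
    and alternatingly_increasing_mirror_le: "2 * i + 2 \<le> n \<Longrightarrow> f (n - i) \<le> f (Suc i)"
  using assms unfolding alternatingly_increasing_def by auto

lemma alternatingly_increasing_Suc_ge:
  assumes ai: "alternatingly_increasing n f" and M: "2 * Suc M \<le> Suc n"
  shows "f M \<le> f (Suc M)"
proof -
  have "f M \<le> f (n - M)"
    using alternatingly_increasing_le_mirror[OF ai, of M] M by simp
  also have "f (n - M) \<le> f (Suc M)"
  proof (cases "2 * M + 2 \<le> n")
    case False
    then have "n - M = Suc M"
      using M by simp
    then show ?thesis
      by simp
  qed (rule alternatingly_increasing_mirror_le[OF ai])
  finally show ?thesis .
qed

lemma alternatingly_increasing_Suc_le: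
  assumes ai: "alternatingly_increasing n f" and M: "n + 2 \<le> 2 * Suc M"
  shows "f (Suc M) \<le> f M"
proof (cases "Suc M \<le> n")
  case False
  then show ?thesis
    using alternatingly_increasing_vanish[OF ai, of "Suc M"] alternatingly_increasing_nonneg[OF ai, of M]
    by simp
next
  case True
  define i where "i = n - Suc M"
  have i: "2 * i + 2 \<le> n" "Suc M = n - i" "M = n - Suc i"
    using True M unfolding i_def by auto
  have "f (n - i) \<le> f (Suc i)"
    using alternatingly_increasing_mirror_le[OF ai i(1)] .
  also have "f (Suc i) \<le> f (n - Suc i)"
  proof (cases "2 * Suc i < n")
    case False
    then have "n - Suc i = Suc i"
      using i(1) by simp
    then show ?thesis
      by simp
  qed (rule alternatingly_increasing_le_mirror[OF ai])
  finally show ?thesis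
    using i by simp
qed

context
  fixes n :: nat and f :: "nat \<Rightarrow> int" and e :: int
  assumes ai: "alternatingly_increasing n f" and e: "e = 0 \<or> e = 1"
begin

lemma coeff_step_nonneg: "0 \<le> coeff_step n e f i"
proof (cases i)
  case (Suc M)
  have "0 \<le> (2 * int n + 2 - 2 * int M - e) * f M" if "M \<le> n"
    using that e alternatingly_increasing_nonneg[OF ai] by auto
  moreover have "f M = 0" if "n < M"
    using that alternatingly_increasing_vanish[OF ai] by simp
  ultimately show ?thesis
    using Suc e alternatingly_increasing_nonneg[OF ai, of "Suc M"] by (cases "M \<le> n") auto
qed (use e alternatingly_increasing_nonneg[OF ai] in auto)

lemma coeff_step_vanish: "Suc n < i \<Longrightarrow> coeff_step n e f i = 0"
  by (cases i) (auto simp: alternatingly_increasing_vanish[OF ai])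

lemma coeff_step_le_mirror:
  assumes i: "2 * i < Suc n"
  shows "coeff_step n e f i \<le> coeff_step n e f (Suc n - i)"
proof (cases i)
  case 0
  have "f 0 \<le> f n"
    using alternatingly_increasing_le_mirror[OF ai, of 0] by (cases n) auto
  moreover have "coeff_step n e f (Suc n) = (2 - e) * f n"
    using alternatingly_increasing_vanish[OF ai, of "Suc n"] by (simp add: algebra_simps)
  ultimately show ?thesis
    using 0 e alternatingly_increasing_nonneg[OF ai, of 0] by auto
next
  case (Suc M)
  have M: "2 * M + 2 \<le> n"
    using i Suc by simp
  define a b c d where "a = f M" and "b = f (n - M)" and "c = f (Suc M)" and "d = f (n - Suc M)"
  have ab: "a \<le> b"
    unfolding a_def b_def using alternatingly_increasing_le_mirror[OF ai, of M] M by simp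
  have bc: "b \<le> c"
    unfolding b_def c_def using alternatingly_increasing_mirror_le[OF ai, of M] M by simp
  have cd: "c \<le> d"
  proof (cases "2 * M + 2 < n")
    case False
    then have "n - Suc M = Suc M"
      using M by simp
    then show ?thesis
      unfolding c_def d_def by simp
  qed (use alternatingly_increasing_le_mirror[OF ai, of "Suc M"] in \<open>simp add: c_def d_def\<close>)
  have "Suc n - i = Suc (n - Suc M)" and "n - M = Suc (n - Suc M)"
    using Suc M by simp_all
  then have "coeff_step n e f (Suc n - i) - coeff_step n e f i =
      (2 * int n - 2 * int M + e) * (b - a) + (2 * int M + 2 + e) * (d - c) + (2 - 2 * e) * (d - a)"
    using Suc M by (simp add: a_def b_def c_def d_def of_nat_diff algebra_simps)
  moreover have "0 \<le> (2 * int n - 2 * int M + e) * (b - a)" and "0 \<le> (2 * int M + 2 + e) * (d - c)"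
    and "0 \<le> (2 - 2 * e) * (d - a)"
    using ab bc cd M e by auto
  ultimately show ?thesis
    by linarith
qed

lemma coeff_step_mirror_le:
  assumes i: "2 * i + 2 \<le> Suc n"
  shows "coeff_step n e f (Suc n - i) \<le> coeff_step n e f (Suc i)"
proof -
  have i1: "2 * i + 1 \<le> n"
    using i by simp
  define p q s t where "p = f i" and "q = f (n - i)" and "s = f (Suc i)" and "t = f (Suc n - i)"
  have qs: "q \<le> s"
  proof (cases "2 * i + 2 \<le> n")
    case False
    then have "n - i = Suc i"
      using i1 by simp
    then show ?thesis
      unfolding q_def s_def by simp
  qed (use alternatingly_increasing_mirror_le[OF ai, of i] in \<open>simp add: q_def s_def\<close>)
  have pq: "p \<le> q"
    unfolding p_def q_def using alternatingly_increasing_le_mirror[OF ai, of i] i1 by simp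
  have tp: "t \<le> p"
  proof (cases i)
    case 0
    then show ?thesis
      unfolding t_def p_def
      using alternatingly_increasing_vanish[OF ai, of "Suc n"] alternatingly_increasing_nonneg[OF ai, of 0]
      by simp
  next
    case (Suc i')
    then have "Suc n - i = n - i'"
      using i1 by simp
    then show ?thesis
      unfolding t_def p_def using alternatingly_increasing_mirror_le[OF ai, of i'] i1 Suc by simp
  qed
  have "Suc n - i = Suc (n - i)"
    using i1 by simp
  then have "coeff_step n e f (Suc i) - coeff_step n e f (Suc n - i) =
      (2 * int i + 2 - e) * (s - q) + (2 * int n + 2 - 2 * int i - e) * (p - t) + 2 * e * (s - t)"
    using i1 by (simp add: p_def q_def s_def t_def of_nat_diff algebra_simps)
  moreover have "0 \<le> (2 * int i + 2 - e) * (s - q)" and "0 \<le> (2 * int n + 2 - 2 * int i - e) * (p - t)"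
    and "0 \<le> 2 * e * (s - t)"
    using qs pq tp i1 e by auto
  ultimately show ?thesis
    by linarith
qed

lemma alternatingly_increasing_coeff_step: "alternatingly_increasing (Suc n) (coeff_step n e f)"
  unfolding alternatingly_increasing_def
  using coeff_step_nonneg coeff_step_vanish coeff_step_le_mirror coeff_step_mirror_le by blast

end

lemma alternatingly_increasing_hpoly: "alternatingly_increasing (a + b) (coeff (hpoly a b))"
proof (induction a)
  case 0
  show ?case
  proof (induction b)
    case 0
    show ?case
      by (simp add: alternatingly_increasing_def eulerB_0 coeff_1)
  next
    case (Suc b)
    then show ?case
      using alternatingly_increasing_coeff_step[of b _ 1] coeff_hpoly_Suc_right[of 0 b] by simp
  qed
next
  case (Suc a)
  then show ?case
    using alternatingly_increasing_coeff_step[of "a + b" _ 0] coeff_hpoly_Suc_left[of a b] by simp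
qed

section \<open>Palindromicity and comparison of the \<open>hpoly a b\<close>\<close>

text \<open>The hypothesis on \<open>m\<close> covers both recurrences: \<open>m = n\<close> for \<open>e = 1\<close> and
  \<open>m = n + 1\<close> for \<open>e = 0\<close>.\<close>

lemma coeff_step_palindromic:
  assumes sym: "\<And>j. j \<le> m \<Longrightarrow> f j = f (m - j)" and vanish: "\<And>i. m < i \<Longrightarrow> f i = 0"
    and m: "int m + e = int n + 1" and j: "j \<le> Suc m"
  shows "coeff_step n e f j = coeff_step n e f (Suc m - j)"
proof -
  have e: "e = int n + 1 - int m"
    using m by simp
  have last: "coeff_step n e f (Suc m) = coeff_step n e f 0"
    using vanish[of "Suc m"] sym[of 0] by (simp add: e algebra_simps)
  show ?thesis
  proof (cases j)
    case (Suc M)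
    show ?thesis
    proof (cases "M = m")
      case False
      then have M: "M < m"
        using Suc j by simp
      then have "Suc m - j = Suc (m - Suc M)" and "m - M = Suc (m - Suc M)"
        using Suc by simp_all
      moreover have "f (m - M) = f M" and "f (m - Suc M) = f (Suc M)"
        using sym[of M] sym[of "Suc M"] M by simp_all
      ultimately show ?thesis
        using Suc M by (simp add: e of_nat_diff algebra_simps)
    qed (use Suc last in simp)
  qed (use last in simp)
qed

lemma coeff_eulerB_palindromic: "j \<le> n \<Longrightarrow> coeff (eulerB n) j = coeff (eulerB n) (n - j)"
proof (induction n arbitrary: j)
  case (Suc n)
  have "coeff (eulerB n) i = 0" if "n < i" for i
    using alternatingly_increasing_vanish[OF alternatingly_increasing_hpoly[of 0 n]] that by simp
  from coeff_step_palindromic[of n "coeff (eulerB n)", OF Suc.IH this _ Suc.prems]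
  show ?case
    using coeff_hpoly_Suc_right[of 0 n] by simp
qed simp

lemma coeff_hpoly_Suc_0_palindromic:
  "j \<le> Suc (Suc a) \<Longrightarrow> coeff (hpoly (Suc a) 0) j = coeff (hpoly (Suc a) 0) (Suc (Suc a) - j)"
proof (induction a arbitrary: j)
  case 0
  have "coeff (hpoly 1 0) = coeff_step 0 0 (coeff 1)"
    using coeff_hpoly_Suc_left[of 0 0] by (simp add: eulerB_0)
  then have "coeff (hpoly 1 0) 0 = 0" and "coeff (hpoly 1 0) 2 = 0"
    by (simp_all add: numeral_2_eq_2)
  moreover have "j = 0 \<or> j = 1 \<or> j = 2"
    using 0 by auto
  ultimately show ?case
    by (auto simp: numeral_2_eq_2)
next
  case (Suc a)
  have "coeff (hpoly (Suc a) 0) i = 0" if "Suc a < i" for i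
    using alternatingly_increasing_vanish[OF alternatingly_increasing_hpoly[of "Suc a" 0]] that by simp
  from coeff_step_palindromic[of "Suc (Suc a)" "coeff (hpoly (Suc a) 0)", OF Suc.IH this _ Suc.prems]
  show ?case
    using coeff_hpoly_Suc_left[of "Suc a" 0] by simp
qed

lemma coeff_one_minus_X_mult_0 [simp]:
  fixes h :: "'a::comm_ring_1 poly"
  shows "coeff ((1 - [:0, 1:]) * h) 0 = coeff h 0"
  by (simp add: left_diff_distrib)

lemma coeff_one_minus_X_mult_Suc [simp]:
  fixes h :: "'a::comm_ring_1 poly"
  shows "coeff ((1 - [:0, 1:]) * h) (Suc M) = coeff h (Suc M) - coeff h M"
  by (simp add: left_diff_distrib)

lemma coeff_hpoly_Suc_left_le:
  assumes "2 * M \<le> a + b + 1"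
  shows "coeff (hpoly (Suc a) b) M \<le> coeff (hpoly a (Suc b)) M"
proof -
  have "0 \<le> coeff ((1 - [:0, 1:]) * hpoly a b) M"
  proof (cases M)
    case 0
    then show ?thesis
      using alternatingly_increasing_nonneg[OF alternatingly_increasing_hpoly] by simp
  next
    case (Suc M')
    then show ?thesis
      using alternatingly_increasing_Suc_ge[OF alternatingly_increasing_hpoly, of M' a b] assms by simp
  qed
  then show ?thesis
    by (simp add: hpoly_Suc_left)
qed

lemma coeff_hpoly_Suc_right_le:
  assumes "a + b + 2 \<le> 2 * M"
  shows "coeff (hpoly a (Suc b)) M \<le> coeff (hpoly (Suc a) b) M"
proof -
  obtain M' where M: "M = Suc M'"
    using assms by (cases M) auto
  have "coeff ((1 - [:0, 1:]) * hpoly a b) M \<le> 0"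
    using alternatingly_increasing_Suc_le[OF alternatingly_increasing_hpoly, of a b M'] assms M by simp
  then show ?thesis
    by (simp add: hpoly_Suc_left)
qed

lemma coeff_hpoly_0_right_le:
  "2 * j \<le> a + b \<Longrightarrow> coeff (hpoly (a + b) 0) j \<le> coeff (hpoly a b) j"
proof (induction b arbitrary: a)
  case (Suc b)
  have "coeff (hpoly (Suc a + b) 0) j \<le> coeff (hpoly (Suc a) b) j"
    using Suc.IH[of "Suc a"] Suc.prems by simp
  also have "\<dots> \<le> coeff (hpoly a (Suc b)) j"
    using Suc.prems by (intro coeff_hpoly_Suc_left_le) simp
  finally show ?case
    by simp
qed simp

lemma coeff_hpoly_le_0_right:
  "a + b + 1 \<le> 2 * j \<Longrightarrow> coeff (hpoly a b) j \<le> coeff (hpoly (a + b) 0) j"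
proof (induction b arbitrary: a)
  case (Suc b)
  have "coeff (hpoly a (Suc b)) j \<le> coeff (hpoly (Suc a) b) j"
    using Suc.prems by (intro coeff_hpoly_Suc_right_le) simp
  also have "\<dots> \<le> coeff (hpoly (Suc a + b) 0) j"
    using Suc.IH[of "Suc a"] Suc.prems by simp
  finally show ?case
    by simp
qed simp

lemma coeff_eulerB_le_hpoly:
  assumes "2 * M + 1 \<le> k"
  shows "coeff (eulerB k) M \<le> coeff (hpoly k 0) (Suc M)"
proof -
  obtain a where k: "k = Suc a"
    using assms by (cases k) auto
  have "coeff (eulerB k) M = coeff (hpoly 0 k) (k - M)"
    using coeff_eulerB_palindromic[of M k] assms by simp
  also have "\<dots> \<le> coeff (hpoly k 0) (k - M)"
    using coeff_hpoly_le_0_right[of 0 k "k - M"] assms by simp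
  also have "\<dots> = coeff (hpoly k 0) (Suc M)"
    using coeff_hpoly_Suc_0_palindromic[of "Suc M" a] assms k by simp
  finally show ?thesis .
qed

lemma coeff_hpoly_le_eulerB:
  assumes "k \<le> 2 * M"
  shows "coeff (hpoly k 0) (Suc M) \<le> coeff (eulerB k) M"
proof (cases "M < k")
  case True
  then obtain a where k: "k = Suc a"
    by (cases k) auto
  have "coeff (hpoly k 0) (Suc M) = coeff (hpoly k 0) (k - M)"
    using coeff_hpoly_Suc_0_palindromic[of "Suc M" a] True k by simp
  also have "\<dots> \<le> coeff (hpoly 0 k) (k - M)"
    using coeff_hpoly_0_right_le[of "k - M" 0 k] assms by simp
  also have "\<dots> = coeff (eulerB k) M"
    using coeff_eulerB_palindromic[of M k] True by simp
  finally show ?thesis .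
next
  case False
  then show ?thesis
    using alternatingly_increasing_vanish[OF alternatingly_increasing_hpoly[of k 0], of "Suc M"]
      alternatingly_increasing_nonneg[OF alternatingly_increasing_hpoly[of 0 k], of M] by simp
qed

section \<open>Unimodality\<close>

lemma nth_coeffs: "j < length (coeffs p) \<Longrightarrow> coeffs p ! j = coeff p j"
  by (simp add: nth_default_coeffs_eq[symmetric] nth_default_def)

lemma unimodal_list_coeffs:
  fixes p :: "'a::{zero, linorder} poly"
  assumes rise: "\<And>n. n < t \<Longrightarrow> coeff p n \<le> coeff p (Suc n)"
    and fall: "\<And>n. t \<le> n \<Longrightarrow> coeff p (Suc n) \<le> coeff p n"
  shows "unimodal_list (coeffs p)"
  unfolding unimodal_list_def
proof (intro exI[of _ t] conjI allI impI)
  fix i j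
  assume "i \<le> j \<and> j \<le> t \<and> j < length (coeffs p)"
  then show "coeffs p ! i \<le> coeffs p ! j"
    using lift_Suc_mono_le_ivl[of "{..<t}" "coeff p" i j] rise by (simp add: nth_coeffs subset_eq)
next
  fix i j
  assume "t \<le> i \<and> i \<le> j \<and> j < length (coeffs p)"
  then show "coeffs p ! j \<le> coeffs p ! i"
    using lift_Suc_antimono_le_ivl[of "{t..}" "coeff p" i j] fall by (simp add: nth_coeffs subset_eq)
qed

lemma unimodal_list_coeffs_threshold:
  fixes p :: "'a::{zero, linorder} poly" and s :: "nat \<Rightarrow> nat"
  assumes "mono s"
    and rise: "\<And>n. s n \<le> K \<Longrightarrow> coeff p n \<le> coeff p (Suc n)"
    and fall: "\<And>n. K < s n \<Longrightarrow> coeff p (Suc n) \<le> coeff p n"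
  shows "unimodal_list (coeffs p)"
proof (cases "\<exists>n. K < s n")
  case True
  define t where "t = (LEAST n. K < s n)"
  have threshold: "s n \<le> K \<longleftrightarrow> n < t" for n
    using LeastI_ex[OF True] Least_le[of "\<lambda>n. K < s n"] \<open>mono s\<close>
    unfolding t_def by (meson le_trans monoD not_less)
  show ?thesis
  proof (rule unimodal_list_coeffs[of t])
    show "coeff p n \<le> coeff p (Suc n)" if "n < t" for n
      using rise threshold that by blast
    show "coeff p (Suc n) \<le> coeff p n" if "t \<le> n" for n
      using fall threshold that by (meson not_less)
  qed
next
  case False
  show ?thesis
  proof (rule unimodal_list_coeffs[of "length (coeffs p)"])
    show "coeff p n \<le> coeff p (Suc n)" for n
      using rise False by (simp add: not_less)
    show "coeff p (Suc n) \<le> coeff p n" if "length (coeffs p) \<le> n" for n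
      using that by (simp add: nth_default_coeffs_eq[symmetric] nth_default_def)
  qed
qed

lemma nat_block_cases:
  fixes n k :: nat
  obtains (inner) M r where "n = M * (k + 1) + r" "r < k" "n div (k + 1) = M" "Suc n div (k + 1) = M"
  | (last) M where "n = M * (k + 1) + k" "n div (k + 1) = M" "Suc n div (k + 1) = Suc M"
proof -
  define M r where "M = n div (k + 1)" and "r = n mod (k + 1)"
  have n: "n = M * (k + 1) + r"
    unfolding M_def r_def by (rule div_mult_mod_eq[symmetric])
  have M: "n div (k + 1) = M"
    by (simp add: M_def)
  have block_div: "(m * (k + 1) + s) div (k + 1) = m" if "s \<le> k" for m s
    using that by (subst div_mult_self3) auto
  have "r \<le> k"
    using mod_less_divisor[of "k + 1" n] by (simp add: r_def)
  then consider "r < k" | "r = k"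
    by linarith
  then show ?thesis
  proof cases
    case 1
    have "Suc n = M * (k + 1) + Suc r"
      using n by simp
    then have "Suc n div (k + 1) = M"
      using block_div[of "Suc r" M] 1 by simp
    then show ?thesis
      by (rule inner[OF n 1 M])
  next
    case 2
    have "Suc n = Suc M * (k + 1) + 0"
      using n 2 by simp
    then have "Suc n div (k + 1) = Suc M"
      using block_div[of 0 "Suc M"] by simp
    then show ?thesis
      using n 2 by (intro last[OF _ M]) simp_all
  qed
qed

text \<open>For \<open>n = M (k + 1) + r\<close> with \<open>r \<le> k\<close>, the quantity \<open>n div (k + 1) + Suc n div (k + 1)\<close> is \<open>2 M\<close>,
  or \<open>2 M + 1\<close> if \<open>r = k\<close>; as it is monotone in \<open>n\<close>, it locates the peak of \<open>Tpoly k\<close>.\<close>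

lemma coeff_Tpoly_Suc_ge:
  assumes "n div (k + 1) + Suc n div (k + 1) \<le> k"
  shows "coeff (Tpoly k) n \<le> coeff (Tpoly k) (Suc n)"
proof (cases n k rule: nat_block_cases)
  case (inner M r)
  have "coeff (Tpoly k) n = coeff (hpoly (Suc (k - Suc r)) r) M"
    using coeff_Tpoly[of r k M] inner by (simp add: Suc_diff_Suc)
  also have "\<dots> \<le> coeff (hpoly (k - Suc r) (Suc r)) M"
    using assms inner by (intro coeff_hpoly_Suc_left_le) simp
  also have "\<dots> = coeff (Tpoly k) (Suc n)"
    using coeff_Tpoly[of "Suc r" k M] inner by simp
  finally show ?thesis .
next
  case (last M)
  have "coeff (Tpoly k) n = coeff (eulerB k) M"
    using coeff_Tpoly[of k k M] last by simp
  also have "\<dots> \<le> coeff (hpoly k 0) (Suc M)"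
    using assms last by (intro coeff_eulerB_le_hpoly) simp
  also have "\<dots> = coeff (Tpoly k) (Suc n)"
    using coeff_Tpoly[of 0 k "Suc M"] last by (simp add: ac_simps)
  finally show ?thesis .
qed

lemma coeff_Tpoly_Suc_le:
  assumes "k < n div (k + 1) + Suc n div (k + 1)"
  shows "coeff (Tpoly k) (Suc n) \<le> coeff (Tpoly k) n"
proof (cases n k rule: nat_block_cases)
  case (inner M r)
  have "coeff (Tpoly k) (Suc n) = coeff (hpoly (k - Suc r) (Suc r)) M"
    using coeff_Tpoly[of "Suc r" k M] inner by simp
  also have "\<dots> \<le> coeff (hpoly (Suc (k - Suc r)) r) M"
    using assms inner by (intro coeff_hpoly_Suc_right_le) simp
  also have "\<dots> = coeff (Tpoly k) n"
    using coeff_Tpoly[of r k M] inner by (simp add: Suc_diff_Suc)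
  finally show ?thesis .
next
  case (last M)
  have "coeff (Tpoly k) (Suc n) = coeff (hpoly k 0) (Suc M)"
    using coeff_Tpoly[of 0 k "Suc M"] last by (simp add: ac_simps)
  also have "\<dots> \<le> coeff (eulerB k) M"
    using assms last by (intro coeff_hpoly_le_eulerB) simp
  also have "\<dots> = coeff (Tpoly k) n"
    using coeff_Tpoly[of k k M] last by simp
  finally show ?thesis .
qed

theorem mainTheorem4:
  fixes k :: nat
  shows "unimodal_list (coeffs (Tpoly k))"
proof (rule unimodal_list_coeffs_threshold[where K = k])
  show "mono (\<lambda>n. n div (k + 1) + Suc n div (k + 1))"
    by (intro monoI add_mono div_le_mono) simp_all
qed (use coeff_Tpoly_Suc_ge coeff_Tpoly_Suc_le in auto)

end
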